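(* Let $A$ be a quasi-local algebra over $\mathbb{Z}$ with finite-dimensional local algebras $A_I$ satisfying weak algebraic Haag duality. An $A$-$A$ C$^\star$-correspondence $X$ is a DHR bimodule if and only if there exists $S\ge 0$ such that for every interval $I\subseteq\mathbb{Z}$ with $|I|\ge S$ there is a finite projective basis of $X$ contained in $X_I$.
   Context: A quasi-local algebra over $\mathbb{Z}$ is a unital C$^\star$-algebra $A$ with unital finite-dimensional C$^\star$-subalgebras $A_I$ for intervals $I\subseteq\mathbb{Z}$, increasing in $I$, with $[A_I,A_J]=0$ for disjoint $I,J$ and $\bigcup_IA_I$ norm dense. Weak algebraic Haag duality: there is $T\ge0$ such that $A_{I^c}'\cap A\subseteq A_{I^{+T}}$ for intervals $I$, where $I^{+T}$ is the $T$-neighbourhood of $I$. An $A$-$A$ correspondence is an $A$-$A$ bimodule with a right $A$-valued inner product making it a right Hilbert C$^\star$-module on which $A$ acts on the left by adjointable operators. For such $X$, $X_I=\{x\in X: ax=xa\ \forall a\in A_{I^c}\}$. $X$ is a DHR bimodule if there is $R\ge0$ such that for every interval $I$ with $|I|\ge R$, $\dim X_I<\infty$ and $X=X_IA$. A finite projective basis of $X$ is a finite set $\{b_i\}\subseteq X$ with $x=\sum_i b_i\langle b_i|x\rangle$ for all $x\in X$. *)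

theory Defs
  imports "HOL-Analysis.Analysis"
begin

text \<open>Unital C*-algebras are modelled on a type 'a of class real_normed_algebra_1 and banach
  (norm, ring structure, unit, completeness), together with an explicit complex scalar
  multiplication sc and an involution st.\<close>

definition cstar_algebra :: "(complex \<Rightarrow> 'a::{real_normed_algebra_1,banach} \<Rightarrow> 'a) \<Rightarrow> ('a \<Rightarrow> 'a) \<Rightarrow> bool" where
  "cstar_algebra sc st \<longleftrightarrow>
     (\<forall>r a. sc (complex_of_real r) a = r *\<^sub>R a) \<and>
     (\<forall>c d a. sc (c + d) a = sc c a + sc d a) \<and>
     (\<forall>c a b. sc c (a + b) = sc c a + sc c b) \<and>
     (\<forall>c d a. sc (c * d) a = sc c (sc d a)) \<and>
     (\<forall>c a b. sc c (a * b) = sc c a * b) \<and>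
     (\<forall>c a b. sc c (a * b) = a * sc c b) \<and>
     (\<forall>c a. norm (sc c a) = cmod c * norm a) \<and>
     (\<forall>a. st (st a) = a) \<and>
     (\<forall>a b. st (a + b) = st a + st b) \<and>
     (\<forall>c a. st (sc c a) = sc (cnj c) (st a)) \<and>
     (\<forall>a b. st (a * b) = st b * st a) \<and>
     (\<forall>a. norm (st a * a) = norm a ^ 2)"

definition star_subalg :: "(complex \<Rightarrow> 'a::ring_1 \<Rightarrow> 'a) \<Rightarrow> ('a \<Rightarrow> 'a) \<Rightarrow> 'a set \<Rightarrow> bool" where
  "star_subalg sc st B \<longleftrightarrow> 0 \<in> B \<and> 1 \<in> B \<and>
     (\<forall>a\<in>B. \<forall>b\<in>B. a + b \<in> B \<and> a * b \<in> B) \<and>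
     (\<forall>c. \<forall>a\<in>B. sc c a \<in> B) \<and> (\<forall>a\<in>B. st a \<in> B)"

definition fin_dim_C :: "(complex \<Rightarrow> 'v::comm_monoid_add \<Rightarrow> 'v) \<Rightarrow> 'v set \<Rightarrow> bool" where
  "fin_dim_C sc S \<longleftrightarrow> (\<exists>B. finite B \<and> B \<subseteq> S \<and> S = {\<Sum>b\<in>B. sc (c b) b | c. True})"

definition interval :: "int set \<Rightarrow> bool" where
  "interval I \<longleftrightarrow> (\<exists>a b. a \<le> b \<and> I = {a..b})"

definition nbhd :: "nat \<Rightarrow> int set \<Rightarrow> int set" where
  "nbhd T I = {k. \<exists>i\<in>I. \<bar>k - i\<bar> \<le> int T}"

definition gen_cstar :: "(complex \<Rightarrow> 'a::{real_normed_algebra_1,banach} \<Rightarrow> 'a) \<Rightarrow> ('a \<Rightarrow> 'a) \<Rightarrow> 'a set \<Rightarrow> 'a set" where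
  "gen_cstar sc st S = \<Inter>{B. S \<subseteq> B \<and> star_subalg sc st B \<and> closed B}"

definition Acompl :: "(complex \<Rightarrow> 'a::{real_normed_algebra_1,banach} \<Rightarrow> 'a) \<Rightarrow> ('a \<Rightarrow> 'a) \<Rightarrow> (int set \<Rightarrow> 'a set) \<Rightarrow> int set \<Rightarrow> 'a set" where
  "Acompl sc st Aloc I = gen_cstar sc st (\<Union>{Aloc J | J. interval J \<and> J \<inter> I = {}})"

definition quasi_local :: "(complex \<Rightarrow> 'a::{real_normed_algebra_1,banach} \<Rightarrow> 'a) \<Rightarrow> ('a \<Rightarrow> 'a) \<Rightarrow> (int set \<Rightarrow> 'a set) \<Rightarrow> bool" where
  "quasi_local sc st Aloc \<longleftrightarrow> cstar_algebra sc st \<and>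
     (\<forall>I. interval I \<longrightarrow> star_subalg sc st (Aloc I) \<and> fin_dim_C sc (Aloc I)) \<and>
     (\<forall>I J. interval I \<longrightarrow> interval J \<longrightarrow> I \<subseteq> J \<longrightarrow> Aloc I \<subseteq> Aloc J) \<and>
     (\<forall>I J. interval I \<longrightarrow> interval J \<longrightarrow> I \<inter> J = {} \<longrightarrow>
        (\<forall>a\<in>Aloc I. \<forall>b\<in>Aloc J. a * b = b * a)) \<and>
     closure (\<Union>{Aloc I | I. interval I}) = UNIV"

definition weak_haag :: "(complex \<Rightarrow> 'a::{real_normed_algebra_1,banach} \<Rightarrow> 'a) \<Rightarrow> ('a \<Rightarrow> 'a) \<Rightarrow> (int set \<Rightarrow> 'a set) \<Rightarrow> bool" where
  "weak_haag sc st Aloc \<longleftrightarrow> (\<exists>T::nat. \<forall>I. interval I \<longrightarrow>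
     {x. \<forall>a\<in>Acompl sc st Aloc I. x * a = a * x} \<subseteq> Aloc (nbhd T I))"

text \<open>A-A correspondence on a type 'x: complex scalar multiplication scX, right action ra,
  left action la, right A-valued inner product ip (linear in the second variable).\<close>
definition correspondence ::
  "(complex \<Rightarrow> 'a::{real_normed_algebra_1,banach} \<Rightarrow> 'a) \<Rightarrow> ('a \<Rightarrow> 'a) \<Rightarrow>
   (complex \<Rightarrow> 'x::ab_group_add \<Rightarrow> 'x) \<Rightarrow> ('x \<Rightarrow> 'a \<Rightarrow> 'x) \<Rightarrow> ('a \<Rightarrow> 'x \<Rightarrow> 'x) \<Rightarrow> ('x \<Rightarrow> 'x \<Rightarrow> 'a) \<Rightarrow> bool" where
  "correspondence sc st scX ra la ip \<longleftrightarrow>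
     \<comment> \<open>complex vector space\<close>
     (\<forall>c d x. scX (c + d) x = scX c x + scX d x) \<and>
     (\<forall>c x y. scX c (x + y) = scX c x + scX c y) \<and>
     (\<forall>c d x. scX (c * d) x = scX c (scX d x)) \<and>
     (\<forall>x. scX 1 x = x) \<and>
     \<comment> \<open>right A-module\<close>
     (\<forall>x y a. ra (x + y) a = ra x a + ra y a) \<and>
     (\<forall>x a b. ra x (a + b) = ra x a + ra x b) \<and>
     (\<forall>x a b. ra x (a * b) = ra (ra x a) b) \<and>
     (\<forall>x. ra x 1 = x) \<and>
     (\<forall>c x a. ra (scX c x) a = scX c (ra x a)) \<and>
     (\<forall>c x a. ra x (sc c a) = scX c (ra x a)) \<and>
     \<comment> \<open>left A-module, commuting with the right action\<close>
     (\<forall>a b x. la (a + b) x = la a x + la b x) \<and>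
     (\<forall>a x y. la a (x + y) = la a x + la a y) \<and>
     (\<forall>a b x. la (a * b) x = la a (la b x)) \<and>
     (\<forall>x. la 1 x = x) \<and>
     (\<forall>c a x. la (sc c a) x = scX c (la a x)) \<and>
     (\<forall>c a x. la a (scX c x) = scX c (la a x)) \<and>
     (\<forall>a x b. la a (ra x b) = ra (la a x) b) \<and>
     \<comment> \<open>left action by adjointable operators (a *-representation)\<close>
     (\<forall>a x y. ip (la a x) y = ip x (la (st a) y)) \<and>
     \<comment> \<open>right A-valued inner product\<close>
     (\<forall>x y z. ip x (y + z) = ip x y + ip x z) \<and>
     (\<forall>c x y. ip x (scX c y) = sc c (ip x y)) \<and>
     (\<forall>x y a. ip x (ra y a) = ip x y * a) \<and>
     (\<forall>x y. ip y x = st (ip x y)) \<and>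
     (\<forall>x. \<exists>b. ip x x = st b * b) \<and>
     (\<forall>x. ip x x = 0 \<longrightarrow> x = 0) \<and>
     \<comment> \<open>completeness for the norm sqrt (norm (ip x x))\<close>
     (\<forall>f::nat \<Rightarrow> 'x. (\<forall>e>0. \<exists>N. \<forall>m\<ge>N. \<forall>n\<ge>N. sqrt (norm (ip (f m - f n) (f m - f n))) < e) \<longrightarrow>
        (\<exists>l. (\<lambda>n. sqrt (norm (ip (f n - l) (f n - l)))) \<longlonglongrightarrow> 0))"

definition Xloc ::
  "(complex \<Rightarrow> 'a::{real_normed_algebra_1,banach} \<Rightarrow> 'a) \<Rightarrow> ('a \<Rightarrow> 'a) \<Rightarrow> (int set \<Rightarrow> 'a set) \<Rightarrow>
   ('x \<Rightarrow> 'a \<Rightarrow> 'x) \<Rightarrow> ('a \<Rightarrow> 'x \<Rightarrow> 'x) \<Rightarrow> int set \<Rightarrow> 'x set" where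
  "Xloc sc st Aloc ra la I = {x. \<forall>a\<in>Acompl sc st Aloc I. la a x = ra x a}"

definition right_span :: "('x::comm_monoid_add \<Rightarrow> 'a \<Rightarrow> 'x) \<Rightarrow> 'x set \<Rightarrow> 'x set" where
  "right_span ra S = {\<Sum>i<n. ra (xs i) (ys i) | (n::nat) xs ys. \<forall>i<n. xs i \<in> S}"

definition DHR_bimodule ::
  "(complex \<Rightarrow> 'a::{real_normed_algebra_1,banach} \<Rightarrow> 'a) \<Rightarrow> ('a \<Rightarrow> 'a) \<Rightarrow> (int set \<Rightarrow> 'a set) \<Rightarrow>
   (complex \<Rightarrow> 'x::ab_group_add \<Rightarrow> 'x) \<Rightarrow> ('x \<Rightarrow> 'a \<Rightarrow> 'x) \<Rightarrow> ('a \<Rightarrow> 'x \<Rightarrow> 'x) \<Rightarrow> bool" where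
  "DHR_bimodule sc st Aloc scX ra la \<longleftrightarrow> (\<exists>R::nat. \<forall>I. interval I \<longrightarrow> card I \<ge> R \<longrightarrow>
     fin_dim_C scX (Xloc sc st Aloc ra la I) \<and> right_span ra (Xloc sc st Aloc ra la I) = UNIV)"

definition proj_basis :: "('x::comm_monoid_add \<Rightarrow> 'a \<Rightarrow> 'x) \<Rightarrow> ('x \<Rightarrow> 'x \<Rightarrow> 'a) \<Rightarrow> 'x set \<Rightarrow> bool" where
  "proj_basis ra ip B \<longleftrightarrow> finite B \<and> (\<forall>x. x = (\<Sum>b\<in>B. ra b (ip b x)))"

end

theory Submission
  imports Defs "HOL-Computational_Algebra.Fundamental_Theorem_Algebra"
begin

(* By weak Haag duality the relative commutant of A_{I^c} lies in the finite-dimensional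
   C*-algebra A_{I^{+T}}; X_I is a right module over it, and <x|y> lies in it for x, y in X_I.

   If X is DHR, X_I is finite-dimensional and a projective basis of X_I is built by Gram-Schmidt:
   a nonzero <x|x> has a positive eigenvalue, and rescaling x by an element of the functional
   calculus of <x|x> yields e with <e|e> = E the corresponding spectral projection; splitting off
   e<e|-> lowers the dimension. Since X = X_I A, the basis of X_I is one of X. That <x|x> = b* b
   is positive is the Kelley-Vaught theorem, proved here in finite dimension and extended to all
   b by density of the local algebras, positivity of b* b being a closed condition on b.

   Conversely, a projective basis B inside X_I gives X = X_I A at once, and X_I is spanned by
   the vectors b a with b in B and a in a basis of A_{I^{+T}}, because <b|x> lies in the
   relative commutant for x in X_I. *)

section \<open>C*-algebras and polynomial functional calculus\<close>

locale cstar =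
  fixes sc :: "complex \<Rightarrow> 'a::{real_normed_algebra_1,banach} \<Rightarrow> 'a" and st :: "'a \<Rightarrow> 'a"
  assumes is_cstar_algebra: "cstar_algebra sc st"
begin

lemma sc_of_real: "sc (complex_of_real r) a = r *\<^sub>R a"
  and sc_add_left: "sc (c + d) a = sc c a + sc d a"
  and sc_add_right: "sc c (a + b) = sc c a + sc c b"
  and sc_sc: "sc c (sc d a) = sc (c * d) a"
  and sc_mult_left: "sc c a * b = sc c (a * b)"
  and sc_mult_right: "a * sc c b = sc c (a * b)"
  and norm_sc: "norm (sc c a) = cmod c * norm a"
  and st_st [simp]: "st (st a) = a"
  and st_add: "st (a + b) = st a + st b"
  and st_sc: "st (sc c a) = sc (cnj c) (st a)"
  and st_mult: "st (a * b) = st b * st a"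
  and norm_st_mult_self: "norm (st a * a) = norm a ^ 2"
  using is_cstar_algebra unfolding cstar_algebra_def by metis+

lemma sc_one [simp]: "sc 1 a = a"
  using sc_of_real[of 1 a] by simp

sublocale vs: vector_space sc
  by unfold_locales (simp_all add: sc_add_right sc_add_left sc_sc)

lemma sc_eq_0_iff: "sc c a = 0 \<longleftrightarrow> c = 0 \<or> a = 0"
  using norm_sc[of c a] by auto

lemma st_0 [simp]: "st 0 = 0"
  using st_add[of 0 0] by simp

lemma st_minus: "st (- a) = - st a"
  using st_add[of a "-a"] by (simp add: eq_neg_iff_add_eq_0 add.commute)

lemma st_diff: "st (a - b) = st a - st b"
  using st_add[of a "-b"] st_minus[of b] by simp

lemma st_1 [simp]: "st 1 = 1"
  using st_mult[of "st 1" 1] by simp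

lemma st_scaleR: "st (r *\<^sub>R a) = r *\<^sub>R st a"
  using st_sc[of "complex_of_real r" a] by (simp add: sc_of_real)

lemma st_sum: "st (sum f A) = (\<Sum>x\<in>A. st (f x))"
  by (induction A rule: infinite_finite_induct) (auto simp: st_add)

lemma st_power: "st h = h \<Longrightarrow> st (h ^ n) = h ^ n"
  by (induction n) (auto simp: st_mult power_commutes)

lemma norm_st [simp]: "norm (st a) = norm a"
proof -
  have le: "norm b \<le> norm (st b)" for b
  proof (cases "b = 0")
    case False
    have "norm b ^ 2 \<le> norm (st b) * norm b"
      using norm_st_mult_self[of b] norm_mult_ineq[of "st b" b] by simp
    thus ?thesis using False by (simp add: power2_eq_square)
  qed simp
  show ?thesis using le[of a] le[of "st a"] by simp
qed

lemma st_mult_self_eq_0_iff: "st y * y = 0 \<longleftrightarrow> y = 0"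
  using norm_st_mult_self[of y] by auto

lemma norm_mult_self_sa: "st h = h \<Longrightarrow> norm (h * h) = norm h ^ 2"
  using norm_st_mult_self[of h] by simp

lemma norm_projection:
  assumes "st q = q" "q * q = q" "q \<noteq> 0" shows "norm q = 1"
  using norm_mult_self_sa[of q] assms by (auto simp: power2_eq_square)

lemma norm_projection_le:
  assumes "st q = q" "q * q = q" shows "norm q \<le> 1"
  using norm_projection[OF assms] by (cases "q = 0") auto

definition peval :: "'a \<Rightarrow> complex poly \<Rightarrow> 'a" where
  "peval h f = (\<Sum>i\<le>degree f. sc (coeff f i) (h ^ i))"

lemma peval_eq_sum:
  assumes "degree f \<le> n" shows "peval h f = (\<Sum>i\<le>n. sc (coeff f i) (h ^ i))"
  unfolding peval_def
  by (rule sum.mono_neutral_left) (use assms in \<open>auto simp: coeff_eq_0\<close>)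

lemma peval_0 [simp]: "peval h 0 = 0"
  by (simp add: peval_def)

lemma peval_add: "peval h (f + g) = peval h f + peval h g"
  using degree_add_le_max[of f g]
  by (simp add: peval_eq_sum[of _ "max (degree f) (degree g)"] sc_add_left sum.distrib)

lemma peval_smult: "peval h (smult c f) = sc c (peval h f)"
  by (simp add: peval_eq_sum[OF degree_smult_le] peval_def vs.scale_sum_right sc_sc)

lemma peval_pCons: "peval h (pCons a f) = sc a 1 + h * peval h f"
proof -
  have "peval h (pCons a f) = (\<Sum>i\<le>Suc (degree f). sc (coeff (pCons a f) i) (h ^ i))"
    by (rule peval_eq_sum) (simp add: degree_pCons_le)
  also have "\<dots> = sc a 1 + (\<Sum>i\<le>degree f. sc (coeff f i) (h ^ Suc i))"
    by (subst sum.atMost_Suc_shift) simp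
  also have "(\<Sum>i\<le>degree f. sc (coeff f i) (h ^ Suc i)) = h * peval h f"
    by (simp add: peval_def sum_distrib_left sc_mult_right)
  finally show ?thesis .
qed

lemma peval_const: "peval h [:c:] = sc c 1"
  using peval_pCons[of h c 0] by simp

lemma peval_1 [simp]: "peval h 1 = 1"
  using peval_const[of h 1] by (simp add: one_pCons)

lemma peval_linear: "peval h [:-z, 1:] = h - sc z 1"
  using peval_pCons[of h "-z" "[:1:]"] by (simp add: peval_const vs.scale_minus_left)

lemma peval_mult: "peval h (f * g) = peval h f * peval h g"
proof (induction f rule: pCons_induct)
  case (pCons a f)
  have "peval h (pCons a f * g) = sc a (peval h g) + h * peval h (f * g)"
    by (simp add: peval_add peval_smult peval_pCons)
  also have "\<dots> = peval h (pCons a f) * peval h g"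
    by (simp add: peval_pCons pCons distrib_right sc_mult_left mult.assoc)
  finally show ?case .
qed simp

lemma peval_diff: "peval h (f - g) = peval h f - peval h g"
  using peval_add[of h "f - g" g] by (simp add: eq_diff_eq)

lemma peval_sum: "peval h (sum f A) = (\<Sum>x\<in>A. peval h (f x))"
  by (induction A rule: infinite_finite_induct) (auto simp: peval_add)

lemma peval_monom: "peval h (monom c n) = sc c (h ^ n)"
proof -
  have "peval h (monom c n) = (\<Sum>i\<le>n. sc (coeff (monom c n) i) (h ^ i))"
    by (rule peval_eq_sum) (simp add: degree_monom_le)
  also have "\<dots> = sc c (h ^ n)"
    by (simp add: coeff_monom if_distrib[of "\<lambda>c. sc c _"] cong: if_cong)
  finally show ?thesis .
qed

lemma peval_dvd_eq_0: "peval h q = 0 \<Longrightarrow> q dvd f \<Longrightarrow> peval h f = 0"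
  by (auto elim!: dvdE simp: peval_mult)

lemma peval_map_cnj:
  assumes "st h = h" shows "st (peval h f) = peval h (map_poly cnj f)"
proof -
  have "peval h (map_poly cnj f) = (\<Sum>i\<le>degree f. sc (coeff (map_poly cnj f) i) (h ^ i))"
    by (rule peval_eq_sum) (simp add: degree_map_poly)
  then show ?thesis
    by (simp add: peval_def st_sum st_sc st_power[OF assms] coeff_map_poly)
qed

lemma star_subalg_power: "star_subalg sc st D \<Longrightarrow> h \<in> D \<Longrightarrow> h ^ n \<in> D"
  by (induction n) (auto simp: star_subalg_def)

lemma star_subalg_sum:
  "star_subalg sc st D \<Longrightarrow> (\<And>x. x \<in> A \<Longrightarrow> f x \<in> D) \<Longrightarrow> sum f A \<in> D"
  by (induction A rule: infinite_finite_induct) (auto simp: star_subalg_def)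

lemma star_subalg_peval: "star_subalg sc st D \<Longrightarrow> h \<in> D \<Longrightarrow> peval h f \<in> D"
  unfolding peval_def
  by (intro star_subalg_sum) (auto simp: star_subalg_power star_subalg_def)

end

section \<open>Finite-dimensional subspaces and Lagrange interpolation\<close>

lemma fin_dim_C_iff_span:
  fixes scl :: "complex \<Rightarrow> 'v::ab_group_add \<Rightarrow> 'v"
  assumes "vector_space scl"
  shows "fin_dim_C scl V \<longleftrightarrow> (\<exists>B. finite B \<and> B \<subseteq> V \<and> V = module.span scl B)"
proof -
  interpret vector_space scl by fact
  have "{\<Sum>b\<in>B. scl (c b) b | c. True} = span B" if "finite B" for B
    unfolding span_finite[OF that] by auto
  then show ?thesis unfolding fin_dim_C_def by (metis (no_types, lifting))
qed

context vector_space
begin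

lemma finite_basis_of_subspace:
  assumes "subspace V" "V \<subseteq> span G" "finite G"
  obtains B where "finite B" "B \<subseteq> V" "independent B" "span B = V" "card B = dim V"
proof -
  obtain B where B: "B \<subseteq> V" "independent B" "V \<subseteq> span B" "card B = dim V"
    using basis_exists[of V] by blast
  have "finite B"
    using independent_span_bound[OF assms(3) B(2)] B(1) assms(2) by auto
  moreover have "span B = V"
    using span_minimal[OF B(1) assms(1)] B(3) by auto
  ultimately show ?thesis
    using that B(1,2,4) by simp
qed

lemma dim_less_of_not_in_subspace:
  assumes "subspace V'" "V' \<subseteq> V" "e \<in> V" "e \<notin> V'" "subspace V" "V \<subseteq> span G" "finite G"
  shows "dim V' < dim V"
proof -
  have "V' \<subseteq> span G" using assms(2,6) by blast
  then obtain B' where B': "finite B'" "B' \<subseteq> V'" "independent B'" "span B' = V'" "card B' = dim V'"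
    by (rule finite_basis_of_subspace[OF assms(1) _ assms(7)])
  obtain B where B: "finite B" "B \<subseteq> V" "independent B" "span B = V" "card B = dim V"
    by (rule finite_basis_of_subspace[OF assms(5-7)])
  have "independent (insert e B')"
    using independent_insertI[OF _ B'(3)] B'(4) assms(4) by blast
  moreover have "insert e B' \<subseteq> span B" using B'(2) assms(2,3) B(4) by blast
  ultimately have "card (insert e B') \<le> card B"
    using independent_span_bound[OF B(1)] by blast
  moreover have "e \<notin> B'" using B'(2) assms(4) by blast
  ultimately show ?thesis using B'(1,5) B(5) by simp
qed

end
definition lagrange_basis :: "'b::field set \<Rightarrow> 'b \<Rightarrow> 'b poly" where
  "lagrange_basis R r = smult (inverse (\<Prod>s\<in>R-{r}. r - s)) (\<Prod>s\<in>R-{r}. [:-s, 1:])"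

lemma poly_lagrange_basis:
  assumes "finite R" "r \<in> R" "t \<in> R"
  shows "poly (lagrange_basis R r) t = (if t = r then 1 else 0)"
proof (cases "t = r")
  case False
  hence "(\<Prod>s\<in>R-{r}. t - s) = 0" using assms by (intro prod_zero) auto
  thus ?thesis using False by (simp add: lagrange_basis_def poly_prod)
qed (use assms in \<open>simp add: lagrange_basis_def poly_prod\<close>)

lemma degree_lagrange_basis:
  fixes R :: "'b::field set"
  assumes "finite R" "r \<in> R" shows "degree (lagrange_basis R r) < card R"
proof -
  have "degree (\<Prod>s\<in>R-{r}. [:-s, 1::'b:]) = card R - 1"
    using assms by (subst degree_prod_eq_sum_degree) auto
  moreover have "card R > 0" using assms card_gt_0_iff by blast
  ultimately show ?thesis
    by (simp add: lagrange_basis_def)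
qed

lemma poly_eq_of_agree_on:
  fixes p q :: "'b::idom poly"
  assumes "finite R" "degree p < card R" "degree q < card R" "\<And>t. t \<in> R \<Longrightarrow> poly p t = poly q t"
  shows "p = q"
proof (rule ccontr)
  assume "p \<noteq> q"
  hence "p - q \<noteq> 0" by simp
  have "card R \<le> card {x. poly (p - q) x = 0}"
    using assms(4) by (intro card_mono poly_roots_finite[OF \<open>p - q \<noteq> 0\<close>]) auto
  also have "\<dots> \<le> degree (p - q)" by (rule card_poly_roots_bound[OF \<open>p - q \<noteq> 0\<close>])
  also have "\<dots> < card R" using degree_diff_le_max[of p q] assms(2,3) by linarith
  finally show False by simp
qed

lemma sum_lagrange_basis:
  fixes R :: "'b::field set"
  assumes "finite R" "R \<noteq> {}" shows "(\<Sum>r\<in>R. lagrange_basis R r) = 1"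
proof (rule poly_eq_of_agree_on[OF assms(1)])
  have "degree (\<Sum>r\<in>R. lagrange_basis R r) \<le> card R - 1"
    using degree_lagrange_basis[OF assms(1)] by (intro degree_sum_le[OF assms(1)]) fastforce
  moreover have "card R > 0" using assms card_gt_0_iff by blast
  ultimately show "degree (\<Sum>r\<in>R. lagrange_basis R r) < card R" by linarith
  show "degree (1::'b poly) < card R" using assms by (simp add: card_gt_0_iff)
  show "poly (\<Sum>r\<in>R. lagrange_basis R r) t = poly 1 t" if "t \<in> R" for t
    using that assms by (simp add: poly_sum poly_lagrange_basis)
qed

lemma prod_linear_dvd_lagrange_basis:
  assumes "finite R" "r \<in> R"
  shows "(\<Prod>s\<in>R. [:-s, 1:]) dvd [:-r, 1:] * lagrange_basis R r"
proof -
  have "(\<Prod>s\<in>R. [:-s, 1:]) = [:-r, 1:] * (\<Prod>s\<in>R-{r}. [:-s, 1:])"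
    using assms by (subst prod.remove[of _ r]) auto
  thus ?thesis unfolding lagrange_basis_def by (simp add: dvd_smult mult_smult_right)
qed

lemma prod_linear_dvd_lagrange_basis_mult:
  assumes "finite R" "r \<in> R" "s \<in> R" "r \<noteq> s"
  shows "(\<Prod>t\<in>R. [:-t, 1:]) dvd lagrange_basis R r * lagrange_basis R s"
proof -
  let ?Q = "\<lambda>r. \<Prod>t\<in>R-{r}. [:-t, 1:]"
  have "(\<Prod>t\<in>R. [:-t, 1:]) = [:-s, 1:] * ?Q s"
    using assms by (subst prod.remove[of _ s]) auto
  also have "\<dots> dvd ?Q r * ?Q s"
    using assms by (intro mult_dvd_mono dvd_prodI) auto
  finally show ?thesis
    unfolding lagrange_basis_def by (simp add: dvd_smult mult_smult_left mult_smult_right)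
qed

lemma map_poly_cnj_lagrange_basis:
  assumes "finite R" "r \<in> R" "\<And>t. t \<in> R \<Longrightarrow> cnj t = t"
  shows "map_poly cnj (lagrange_basis R r) = lagrange_basis R r"
proof (rule poly_eq_of_agree_on[OF assms(1)])
  show "degree (map_poly cnj (lagrange_basis R r)) < card R"
    using degree_lagrange_basis[OF assms(1,2)] by (simp add: degree_map_poly)
  show "poly (map_poly cnj (lagrange_basis R r)) t = poly (lagrange_basis R r) t" if "t \<in> R" for t
    using poly_cnj[of "lagrange_basis R r" t] assms that by (simp add: poly_lagrange_basis)
qed (rule degree_lagrange_basis[OF assms(1,2)])

lemma le_of_power_two_bound:
  fixes x M c :: real
  assumes "M \<ge> 0" "\<And>k. x ^ (2 ^ k) \<le> c * M ^ (2 ^ k)"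
  shows "x \<le> M"
proof (rule ccontr)
  assume "\<not> x \<le> M"
  then have big: "x > M" by simp
  show False
  proof (cases "M = 0")
    case True
    then show False using assms(2)[of 0] big by simp
  next
    case False
    then have Mp: "M > 0" using assms(1) by simp
    define \<rho> where "\<rho> = x / M"
    have \<rho>1: "\<rho> > 1" using big Mp unfolding \<rho>_def by simp
    obtain n where n: "c < \<rho> ^ n" using real_arch_pow[OF \<rho>1] by blast
    have "\<rho> ^ n \<le> \<rho> ^ (2 ^ n)" using \<rho>1 by (intro power_increasing) (auto intro: less_imp_le)
    also have "\<rho> ^ (2 ^ n) = x ^ (2 ^ n) / M ^ (2 ^ n)" unfolding \<rho>_def by (simp add: power_divide)
    also have "\<dots> \<le> c" using assms(2)[of n] Mp by (simp add: divide_le_eq)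
    finally show False using n by simp
  qed
qed

section \<open>The spectral theorem in finite-dimensional C*-algebras\<close>

context cstar
begin

definition fin_dim_subalg :: "'a set \<Rightarrow> bool" where
  "fin_dim_subalg C \<longleftrightarrow> star_subalg sc st C \<and> fin_dim_C sc C"

lemma fin_dim_subalg_mult: "fin_dim_subalg C \<Longrightarrow> a \<in> C \<Longrightarrow> b \<in> C \<Longrightarrow> a * b \<in> C"
  and fin_dim_subalg_add: "fin_dim_subalg C \<Longrightarrow> a \<in> C \<Longrightarrow> b \<in> C \<Longrightarrow> a + b \<in> C"
  and fin_dim_subalg_st: "fin_dim_subalg C \<Longrightarrow> a \<in> C \<Longrightarrow> st a \<in> C"
  and fin_dim_subalg_sc: "fin_dim_subalg C \<Longrightarrow> a \<in> C \<Longrightarrow> sc c a \<in> C"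
  unfolding fin_dim_subalg_def star_subalg_def by blast+

lemma fin_dim_subalg_scaleR: "fin_dim_subalg C \<Longrightarrow> a \<in> C \<Longrightarrow> r *\<^sub>R a \<in> C"
  using fin_dim_subalg_sc[of C a "complex_of_real r"] by (simp add: sc_of_real)

lemma fin_dim_subalg_diff: "fin_dim_subalg C \<Longrightarrow> a \<in> C \<Longrightarrow> b \<in> C \<Longrightarrow> a - b \<in> C"
  using fin_dim_subalg_add[of C a "(-1) *\<^sub>R b"] fin_dim_subalg_scaleR[of C b "-1"] by simp

definition min_annihilator :: "'a \<Rightarrow> complex poly \<Rightarrow> bool" where
  "min_annihilator h m \<longleftrightarrow> m \<noteq> 0 \<and> peval h m = 0 \<and>
     (\<forall>g. g \<noteq> 0 \<and> degree g < degree m \<longrightarrow> peval h g \<noteq> 0)"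

lemma annihilator_exists:
  assumes "fin_dim_subalg C" "h \<in> C" shows "\<exists>f. f \<noteq> 0 \<and> peval h f = 0"
proof -
  obtain B where B: "finite B" "C = vs.span B"
    using assms(1) fin_dim_C_iff_span[OF vs.vector_space_axioms] unfolding fin_dim_subalg_def by blast
  define n where "n = card B"
  show ?thesis
  proof (cases "inj_on (\<lambda>i. h ^ i) {..n}")
    case False
    then obtain i j where ij: "i \<noteq> j" "h ^ i = h ^ j" unfolding inj_on_def by blast
    let ?f = "monom (1::complex) i - monom 1 j"
    have "coeff ?f i = 1" using ij by (simp add: coeff_monom)
    hence "?f \<noteq> 0" by (metis coeff_0 one_neq_zero)
    moreover have "peval h ?f = 0" by (simp add: peval_diff peval_monom ij)
    ultimately show ?thesis by blast
  next
    case True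
    define P where "P = (\<lambda>i. h ^ i) ` {..n}"
    have "card P = Suc n" unfolding P_def using card_image[OF True] by simp
    moreover have "P \<subseteq> vs.span B"
      unfolding P_def using star_subalg_power assms B(2) unfolding fin_dim_subalg_def by auto
    ultimately have "vs.dependent P"
      using vs.independent_span_bound[OF B(1)] n_def by fastforce
    then obtain u v where uv: "v \<in> P" "u v \<noteq> 0" "(\<Sum>v\<in>P. sc (u v) v) = 0"
      using vs.dependent_finite[of P] unfolding P_def by auto
    define f where "f = (\<Sum>i\<le>n. monom (u (h ^ i)) i)"
    have "peval h f = (\<Sum>v\<in>P. sc (u v) v)"
      unfolding f_def peval_sum peval_monom P_def by (subst sum.reindex[OF True]) simp
    moreover obtain i where i: "i \<le> n" "v = h ^ i" using uv(1) unfolding P_def by auto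
    then have "coeff f i = u v"
      unfolding f_def by (simp add: coeff_sum coeff_monom)
    ultimately show ?thesis using uv by (metis coeff_0)
  qed
qed

lemma min_annihilator_exists:
  assumes "fin_dim_subalg C" "h \<in> C" shows "\<exists>m. min_annihilator h m"
proof -
  define S where "S = {f. f \<noteq> 0 \<and> peval h f = 0}"
  obtain f0 where "f0 \<in> S" using annihilator_exists[OF assms] S_def by blast
  then obtain m where "m \<in> S" "\<And>g. g \<in> S \<Longrightarrow> degree m \<le> degree g"
    using ex_has_least_nat[of "\<lambda>f. f \<in> S" f0 degree] by blast
  then show ?thesis unfolding min_annihilator_def S_def by force
qed

lemma sa_eigenvalue_real:
  assumes "st h = h" "y \<noteq> 0" "h * y = sc z y" shows "cnj z = z"
proof -
  have "sc z (st y * y) = st y * (h * y)" by (simp add: assms(3) sc_mult_right)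
  also have "\<dots> = st (h * y) * y" by (simp add: st_mult assms(1) mult.assoc)
  also have "\<dots> = sc (cnj z) (st y * y)" by (simp add: assms(3) st_sc sc_mult_left)
  finally have "sc (z - cnj z) (st y * y) = 0" by (simp add: vs.scale_left_diff_distrib)
  then show ?thesis using assms(2) by (simp add: sc_eq_0_iff st_mult_self_eq_0_iff)
qed

lemma sa_mult_cancel: "st k = k \<Longrightarrow> k * (k * y) = 0 \<Longrightarrow> k * y = 0"
  using st_mult_self_eq_0_iff[of "k * y"] by (simp add: st_mult mult.assoc)

lemma min_annihilator_root:
  assumes m: "min_annihilator h m" and h: "st h = h" and z: "poly m z = 0"
  shows "cnj z = z" and "order z m = 1"
proof -
  have m0: "m \<noteq> 0" and mh: "peval h m = 0"
    and mini: "\<And>g. g \<noteq> 0 \<Longrightarrow> degree g < degree m \<Longrightarrow> peval h g \<noteq> 0"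
    using m unfolding min_annihilator_def by auto
  have "[:-z, 1:] dvd m" using z by (simp add: poly_eq_0_iff_dvd)
  then obtain g where g: "m = [:-z, 1:] * g" by (rule dvdE)
  with m0 have g0: "g \<noteq> 0" by auto
  have "degree ([:-z, 1:] * g) = Suc (degree g)"
    using g0 degree_mult_eq[of "[:-z, 1:]" g] by simp
  then have y0: "peval h g \<noteq> 0" using mini[OF g0] g by simp
  have ker: "(h - sc z 1) * peval h g = 0"
    using mh unfolding g peval_mult peval_linear .
  then have "h * peval h g = sc z (peval h g)"
    by (simp add: left_diff_distrib sc_mult_left)
  then show real: "cnj z = z" by (rule sa_eigenvalue_real[OF h y0])
  have "\<not> [:-z, 1:] ^ 2 dvd m"
  proof
    assume "[:-z, 1:] ^ 2 dvd m"
    then obtain g' where g'm: "m = [:-z, 1:] ^ 2 * g'" by (rule dvdE)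
    have "[:-z, 1:] * g = [:-z, 1:] * ([:-z, 1:] * g')"
      using g g'm by (simp only: power2_eq_square mult.assoc)
    then have g': "g = [:-z, 1:] * g'"
      using mult_left_cancel[of "[:-z, 1:]" g "[:-z, 1:] * g'"] by (simp only: pCons_eq_0_iff) simp
    have "st (h - sc z 1) = h - sc z 1" using real h by (simp add: st_diff st_sc)
    moreover have "(h - sc z 1) * ((h - sc z 1) * peval h g') = 0"
      using ker unfolding g' peval_mult peval_linear mult.assoc .
    ultimately have "(h - sc z 1) * peval h g' = 0" by (rule sa_mult_cancel)
    then have "peval h g = 0" unfolding g' peval_mult peval_linear .
    then show False using y0 by simp
  qed
  then have "\<not> 2 \<le> order z m"
    using le_imp_power_dvd[of 2 "order z m" "[:-z, 1:]"] order_1[of z m] dvd_trans by blast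
  moreover have "order z m \<noteq> 0" using z m0 by (simp add: order_root)
  ultimately show "order z m = 1" by linarith
qed


lemma sa_annihilator_simple_real_roots:
  assumes C: "fin_dim_subalg C" "h \<in> C" and h: "st h = h"
  obtains R where "finite R" "R \<noteq> {}" "\<And>z. z \<in> R \<Longrightarrow> cnj z = z"
    "peval h (\<Prod>z\<in>R. [:-z, 1:]) = 0" "\<And>g. g \<noteq> 0 \<Longrightarrow> degree g < card R \<Longrightarrow> peval h g \<noteq> 0"
proof -
  obtain m where m: "min_annihilator h m" using min_annihilator_exists[OF C] ..
  define R where "R = {z. poly m z = 0}"
  define q where "q = (\<Prod>z\<in>R. [:-z, 1:])"
  have m0: "m \<noteq> 0" using m unfolding min_annihilator_def by blast
  have "m = smult (lead_coeff m) (\<Prod>z\<in>R. [:-z, 1:] ^ order z m)"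
    using complex_poly_decompose[of m] unfolding R_def by simp
  also have "\<dots> = smult (lead_coeff m) q"
    using min_annihilator_root(2)[OF m h] unfolding q_def R_def by (intro arg_cong[of _ _ "smult _"] prod.cong) auto
  finally have mq: "m = smult (lead_coeff m) q" .
  have "sc (lead_coeff m) (peval h q) = 0" using m mq unfolding min_annihilator_def by (metis peval_smult)
  then have hq: "peval h q = 0" using m0 by (simp add: sc_eq_0_iff)
  have "degree q = card R" unfolding q_def by (subst degree_prod_eq_sum_degree) auto
  then have degm: "degree m = card R" using mq m0 by (metis degree_smult_eq smult_eq_0_iff)
  have "R \<noteq> {}" using hq unfolding q_def by auto
  show thesis
  proof (rule that[OF _ \<open>R \<noteq> {}\<close> _ hq[unfolded q_def]])
    show "finite R" unfolding R_def by (rule poly_roots_finite[OF m0])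
    show "cnj z = z" if "z \<in> R" for z
      using min_annihilator_root(1)[OF m h] that unfolding R_def by blast
    show "peval h g \<noteq> 0" if "g \<noteq> 0" "degree g < card R" for g
      using m that degm unfolding min_annihilator_def by auto
  qed
qed

lemma spectral_projections:
  assumes C: "fin_dim_subalg C" "h \<in> C" and h: "st h = h"
  obtains R where "finite R" "\<And>z. z \<in> R \<Longrightarrow> cnj z = z"
    "(\<Sum>z\<in>R. peval h (lagrange_basis R z)) = 1"
    "\<And>z w. z \<in> R \<Longrightarrow> w \<in> R \<Longrightarrow> z \<noteq> w \<Longrightarrow>
       peval h (lagrange_basis R z) * peval h (lagrange_basis R w) = 0"
    "\<And>z. z \<in> R \<Longrightarrow> peval h (lagrange_basis R z) \<noteq> 0"
    "\<And>z. z \<in> R \<Longrightarrow> h * peval h (lagrange_basis R z) = sc z (peval h (lagrange_basis R z))"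
    "\<And>z. z \<in> R \<Longrightarrow> st (peval h (lagrange_basis R z)) = peval h (lagrange_basis R z)"
proof -
  obtain R where finR: "finite R" and "R \<noteq> {}" and real: "\<And>z. z \<in> R \<Longrightarrow> cnj z = z"
    and hq: "peval h (\<Prod>z\<in>R. [:-z, 1:]) = 0"
    and mini: "\<And>g. g \<noteq> 0 \<Longrightarrow> degree g < card R \<Longrightarrow> peval h g \<noteq> 0"
    using sa_annihilator_simple_real_roots[OF C h] by blast
  let ?P = "\<lambda>z. peval h (lagrange_basis R z)"
  show thesis
  proof (rule that[OF finR real])
    show "(\<Sum>z\<in>R. ?P z) = 1"
      using sum_lagrange_basis[OF finR \<open>R \<noteq> {}\<close>] by (metis peval_1 peval_sum)
    show "?P z * ?P w = 0" if "z \<in> R" "w \<in> R" "z \<noteq> w" for z w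
      using peval_dvd_eq_0[OF hq prod_linear_dvd_lagrange_basis_mult[OF finR that]]
      by (simp add: peval_mult)
    show "?P z \<noteq> 0" if "z \<in> R" for z
    proof (rule mini)
      show "lagrange_basis R z \<noteq> 0" using poly_lagrange_basis[OF finR that that] by auto
    qed (rule degree_lagrange_basis[OF finR that])
    show "h * ?P z = sc z (?P z)" if "z \<in> R" for z
    proof -
      have "(h - sc z 1) * ?P z = 0"
        using peval_dvd_eq_0[OF hq prod_linear_dvd_lagrange_basis[OF finR that]]
        by (simp only: peval_mult peval_linear)
      then show ?thesis by (simp add: left_diff_distrib sc_mult_left)
    qed
    show "st (?P z) = ?P z" if "z \<in> R" for z
      using peval_map_cnj[OF h] map_poly_cnj_lagrange_basis[OF finR that real] by simp
  qed
qed

definition spectral_family :: "real set \<Rightarrow> (real \<Rightarrow> 'a) \<Rightarrow> bool" where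
  "spectral_family L P \<longleftrightarrow> finite L \<and>
     (\<forall>l\<in>L. st (P l) = P l \<and> P l * P l = P l \<and> P l \<noteq> 0) \<and>
     (\<forall>l\<in>L. \<forall>m\<in>L. l \<noteq> m \<longrightarrow> P l * P m = 0) \<and> sum P L = 1"

theorem spectral_theorem:
  assumes C: "fin_dim_subalg C" "h \<in> C" and h: "st h = h"
  obtains L P where "spectral_family L P" "h = (\<Sum>l\<in>L. l *\<^sub>R P l)"
    "\<And>D l. star_subalg sc st D \<Longrightarrow> h \<in> D \<Longrightarrow> l \<in> L \<Longrightarrow> P l \<in> D"
proof -
  obtain R where finR: "finite R" and real: "\<And>z. z \<in> R \<Longrightarrow> cnj z = z"
    and sum1: "(\<Sum>z\<in>R. peval h (lagrange_basis R z)) = 1"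
    and orth: "\<And>z w. z \<in> R \<Longrightarrow> w \<in> R \<Longrightarrow> z \<noteq> w \<Longrightarrow>
       peval h (lagrange_basis R z) * peval h (lagrange_basis R w) = 0"
    and nz: "\<And>z. z \<in> R \<Longrightarrow> peval h (lagrange_basis R z) \<noteq> 0"
    and eig: "\<And>z. z \<in> R \<Longrightarrow> h * peval h (lagrange_basis R z) = sc z (peval h (lagrange_basis R z))"
    and sa: "\<And>z. z \<in> R \<Longrightarrow> st (peval h (lagrange_basis R z)) = peval h (lagrange_basis R z)"
    using spectral_projections[OF C h] by blast
  define L where "L = Re ` R"
  define P where "P l = peval h (lagrange_basis R (of_real l))" for l
  have Re_R: "of_real (Re z) = z" if "z \<in> R" for z
    using real[OF that] by (metis complex_is_Real_iff Reals_cnj_iff of_real_Re)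
  have "inj_on Re R" by (rule inj_onI) (metis Re_R)
  then have sum_L: "(\<Sum>l\<in>L. g l) = (\<Sum>z\<in>R. g (Re z))" for g :: "real \<Rightarrow> 'a"
    unfolding L_def by (simp add: sum.reindex)
  have orthP: "P l * P l' = 0" if "l \<in> L" "l' \<in> L" "l \<noteq> l'" for l l'
    using that orth unfolding L_def P_def by (auto simp: Re_R) metis
  have sumP: "sum P L = 1" using sum1 unfolding sum_L P_def by (simp add: Re_R)
  have idem: "P l * P l = P l" if "l \<in> L" for l
  proof -
    have "P l = P l * sum P L" using sumP by simp
    also have "\<dots> = (\<Sum>m\<in>L. P l * P m)" by (rule sum_distrib_left)
    also have "\<dots> = P l * P l"
      using that orthP finR unfolding L_def by (subst sum.remove[of _ l]) (auto intro!: sum.neutral)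
    finally show ?thesis by simp
  qed
  show thesis
  proof (rule that)
    show "spectral_family L P"
      unfolding spectral_family_def using finR sumP idem orthP sa nz
      by (auto simp: L_def P_def Re_R)
    have "h = h * sum P L" using sumP by simp
    also have "\<dots> = (\<Sum>z\<in>R. Re z *\<^sub>R P (Re z))"
      unfolding sum_L sum_distrib_left using eig by (intro sum.cong) (auto simp: P_def Re_R sc_of_real[symmetric])
    finally show "h = (\<Sum>l\<in>L. l *\<^sub>R P l)" unfolding sum_L .
    show "P l \<in> D" if "star_subalg sc st D" "h \<in> D" "l \<in> L" for D l
      unfolding P_def using star_subalg_peval that by blast
  qed
qed


lemma spectral_family_finite: "spectral_family L P \<Longrightarrow> finite L"
  and spectral_family_sum: "spectral_family L P \<Longrightarrow> sum P L = 1"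
  unfolding spectral_family_def by blast+

lemma spectral_family_projection:
  assumes "spectral_family L P" "l \<in> L"
  shows "st (P l) = P l" "P l * P l = P l" "norm (P l) = 1"
  using assms norm_projection unfolding spectral_family_def by auto

lemma spectral_sum_mult_projection:
  assumes "spectral_family L P" "m \<in> L"
  shows "(\<Sum>l\<in>L. a l *\<^sub>R P l) * P m = a m *\<^sub>R P m"
proof -
  have "(\<Sum>l\<in>L. a l *\<^sub>R P l) * P m = (\<Sum>l\<in>L. a l *\<^sub>R (P l * P m))"
    by (simp add: sum_distrib_right)
  also have "\<dots> = a m *\<^sub>R (P m * P m)"
    using assms spectral_family_finite[OF assms(1)]
    by (subst sum.remove[of _ m]) (auto simp: spectral_family_def intro!: sum.neutral)
  finally show ?thesis using spectral_family_projection[OF assms] by simp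
qed

lemma spectral_sum_mult:
  assumes "spectral_family L P"
  shows "(\<Sum>l\<in>L. a l *\<^sub>R P l) * (\<Sum>l\<in>L. b l *\<^sub>R P l) = (\<Sum>l\<in>L. (a l * b l) *\<^sub>R P l)"
  by (simp add: sum_distrib_left spectral_sum_mult_projection[OF assms] mult.commute cong: sum.cong)

lemma spectral_sum_const:
  assumes "spectral_family L P" shows "(\<Sum>l\<in>L. t *\<^sub>R P l) = t *\<^sub>R 1"
  using assms unfolding spectral_family_def by (simp add: scaleR_sum_right[symmetric])

lemma spectral_sum_sa:
  assumes "spectral_family L P" shows "st (\<Sum>l\<in>L. a l *\<^sub>R P l) = (\<Sum>l\<in>L. a l *\<^sub>R P l)"
  using assms unfolding spectral_family_def by (simp add: st_sum st_scaleR)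

lemma spectral_sum_power:
  assumes "spectral_family L P"
  shows "(\<Sum>l\<in>L. a l *\<^sub>R P l) ^ n = (\<Sum>l\<in>L. (a l ^ n) *\<^sub>R P l)"
  by (induction n) (simp_all add: spectral_sum_mult[OF assms] spectral_family_sum[OF assms])

lemma norm_spectral_sum_ge:
  assumes "spectral_family L P" "m \<in> L"
  shows "\<bar>a m\<bar> \<le> norm (\<Sum>l\<in>L. a l *\<^sub>R P l)"
proof -
  have "\<bar>a m\<bar> = norm ((\<Sum>l\<in>L. a l *\<^sub>R P l) * P m)"
    using spectral_family_projection[OF assms] by (simp add: spectral_sum_mult_projection[OF assms])
  also have "\<dots> \<le> norm (\<Sum>l\<in>L. a l *\<^sub>R P l) * norm (P m)" by (rule norm_mult_ineq)
  finally show ?thesis using spectral_family_projection[OF assms] by simp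
qed

lemma norm_power_two_sa:
  assumes "st x = x" shows "norm (x ^ (2 ^ k)) = norm x ^ (2 ^ k)"
proof (induction k)
  case (Suc k)
  have "x ^ (2 ^ Suc k) = x ^ (2 ^ k) * x ^ (2 ^ k)" by (simp add: power_add[symmetric] mult_2)
  then have "norm (x ^ (2 ^ Suc k)) = norm (x ^ (2 ^ k)) ^ 2"
    using norm_mult_self_sa[of "x ^ (2 ^ k)"] st_power[OF assms] by simp
  then show ?case using Suc by (simp add: power_mult[symmetric] mult.commute)
qed simp

text \<open>The triangle inequality alone loses a factor card L; applied to x ^ 2 ^ k, where the
  C*-identity turns norms into powers of norms, the loss disappears in the limit.\<close>

lemma norm_spectral_sum_le:
  assumes "spectral_family L P" "M \<ge> 0" "\<And>l. l \<in> L \<Longrightarrow> \<bar>a l\<bar> \<le> M"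
  shows "norm (\<Sum>l\<in>L. a l *\<^sub>R P l) \<le> M"
proof (rule le_of_power_two_bound[OF assms(2)])
  fix k
  let ?x = "\<Sum>l\<in>L. a l *\<^sub>R P l"
  have "norm ?x ^ (2 ^ k) = norm (\<Sum>l\<in>L. (a l ^ (2 ^ k)) *\<^sub>R P l)"
    using norm_power_two_sa[OF spectral_sum_sa[OF assms(1)], of a k]
    by (simp add: spectral_sum_power[OF assms(1)])
  also have "\<dots> \<le> (\<Sum>l\<in>L. norm ((a l ^ (2 ^ k)) *\<^sub>R P l))" by (rule norm_sum)
  also have "\<dots> \<le> (\<Sum>l\<in>L. M ^ (2 ^ k))"
  proof (rule sum_mono)
    fix l assume l: "l \<in> L"
    have "\<bar>a l\<bar> ^ (2 ^ k) \<le> M ^ (2 ^ k)" using assms(3)[OF l] by (simp add: power_mono)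
    then show "norm ((a l ^ (2 ^ k)) *\<^sub>R P l) \<le> M ^ (2 ^ k)"
      using spectral_family_projection[OF assms(1) l] by (simp add: power_abs)
  qed
  finally show "norm ?x ^ (2 ^ k) \<le> real (card L) * M ^ (2 ^ k)" by simp
qed

section \<open>Positivity\<close>

text \<open>An order-free description of positivity, valid in any unital C*-algebra: a self-adjoint a,
  whose spectrum lies in [-norm a, norm a], is positive iff its spectrum lies in the disc of
  radius norm a around norm a. Unlike the spectrum, this condition is visibly closed in a.\<close>

definition positive_elem :: "'a \<Rightarrow> bool" where
  "positive_elem a \<longleftrightarrow> st a = a \<and> norm (norm a *\<^sub>R 1 - a) \<le> norm a"

lemma shift_spectral_sum:
  assumes "spectral_family L P"
  shows "t *\<^sub>R 1 - (\<Sum>l\<in>L. \<nu> l *\<^sub>R P l) = (\<Sum>l\<in>L. (t - \<nu> l) *\<^sub>R P l)"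
  by (simp add: spectral_sum_const[OF assms, symmetric] scaleR_diff_left sum_subtractf)

lemma spectral_nonneg_of_norm_le:
  assumes "spectral_family L P" "norm (t *\<^sub>R 1 - (\<Sum>l\<in>L. \<nu> l *\<^sub>R P l)) \<le> t" "m \<in> L"
  shows "\<nu> m \<ge> 0"
  using norm_spectral_sum_ge[OF assms(1,3), of "\<lambda>l. t - \<nu> l"] assms(2)
  by (simp add: shift_spectral_sum[OF assms(1)])

lemma positive_elem_spectral_sum:
  assumes "spectral_family L P" "\<And>l. l \<in> L \<Longrightarrow> \<nu> l \<ge> 0"
  shows "positive_elem (\<Sum>l\<in>L. \<nu> l *\<^sub>R P l)"
proof -
  let ?a = "\<Sum>l\<in>L. \<nu> l *\<^sub>R P l"
  have "\<bar>norm ?a - \<nu> l\<bar> \<le> norm ?a" if "l \<in> L" for l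
    using norm_spectral_sum_ge[OF assms(1) that, of \<nu>] assms(2)[OF that] by simp
  then have "norm (norm ?a *\<^sub>R 1 - ?a) \<le> norm ?a"
    unfolding shift_spectral_sum[OF assms(1)] by (intro norm_spectral_sum_le[OF assms(1)]) auto
  then show ?thesis unfolding positive_elem_def using spectral_sum_sa[OF assms(1)] by simp
qed


lemma positive_elem_add:
  assumes C: "fin_dim_subalg C" "a \<in> C" "b \<in> C" and pos: "positive_elem a" "positive_elem b"
  shows "positive_elem (a + b)"
proof -
  have "st (a + b) = a + b" using pos unfolding positive_elem_def by (simp add: st_add)
  then obtain L P where LP: "spectral_family L P" "a + b = (\<Sum>l\<in>L. l *\<^sub>R P l)"
    using spectral_theorem[OF C(1) fin_dim_subalg_add[OF C]] by metis
  define t where "t = norm a + norm b"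
  have "norm (t *\<^sub>R 1 - (a + b)) = norm ((norm a *\<^sub>R 1 - a) + (norm b *\<^sub>R 1 - b))"
    unfolding t_def by (simp add: algebra_simps scaleR_add_left)
  also have "\<dots> \<le> norm (norm a *\<^sub>R 1 - a) + norm (norm b *\<^sub>R 1 - b)" by (rule norm_triangle_ineq)
  also have "\<dots> \<le> t" using pos unfolding positive_elem_def t_def by simp
  finally have "\<And>l. l \<in> L \<Longrightarrow> l \<ge> 0"
    using spectral_nonneg_of_norm_le[OF LP(1), of t "\<lambda>l. l"] LP(2) by simp
  then show ?thesis using positive_elem_spectral_sum[OF LP(1)] LP(2) by simp
qed

lemma positive_elem_square:
  assumes "fin_dim_subalg C" "h \<in> C" "st h = h" shows "positive_elem (h * h)"
proof -
  obtain L P where LP: "spectral_family L P" "h = (\<Sum>l\<in>L. l *\<^sub>R P l)"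
    using spectral_theorem[OF assms] by metis
  then have "h * h = (\<Sum>l\<in>L. (l * l) *\<^sub>R P l)" by (simp add: spectral_sum_mult)
  then show ?thesis using positive_elem_spectral_sum[OF LP(1)] by simp
qed

lemma positive_elem_scaleR:
  assumes "positive_elem a" "r \<ge> 0" shows "positive_elem (r *\<^sub>R a)"
proof -
  have "norm (r *\<^sub>R a) *\<^sub>R 1 - r *\<^sub>R a = r *\<^sub>R (norm a *\<^sub>R 1 - a)"
    using assms(2) by (simp add: scaleR_diff_right)
  then have "norm (norm (r *\<^sub>R a) *\<^sub>R 1 - r *\<^sub>R a) = r * norm (norm a *\<^sub>R 1 - a)"
    using assms(2) by simp
  also have "\<dots> \<le> r * norm a" using assms unfolding positive_elem_def by (simp add: mult_left_mono)
  finally show ?thesis using assms unfolding positive_elem_def by (simp add: st_scaleR)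
qed

lemma positive_elem_projection:
  assumes "st q = q" "q * q = q" shows "positive_elem q"
proof (cases "q = 0")
  case False
  have "st (1 - q) = 1 - q" "(1 - q) * (1 - q) = 1 - q"
    using assms by (simp_all add: st_diff algebra_simps)
  then have "norm (1 - q) \<le> 1" by (rule norm_projection_le)
  then show ?thesis unfolding positive_elem_def using norm_projection[OF assms False] assms by simp
qed (simp add: positive_elem_def)

lemma projection_eq_0_of_positive_neg:
  assumes "st s = s" "s * s = s" "positive_elem (- s)" shows "s = 0"
proof (rule ccontr)
  assume "s \<noteq> 0"
  then have n1: "norm s = 1" using norm_projection[OF assms(1,2)] by simp
  have "(1 + s) * s = 2 *\<^sub>R s" using assms(2) by (simp add: algebra_simps scaleR_2)
  then have "2 = norm ((1 + s) * s)" using n1 by simp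
  also have "\<dots> \<le> norm (1 + s) * norm s" by (rule norm_mult_ineq)
  also have "norm (1 + s) \<le> 1" using assms(3) n1 unfolding positive_elem_def by simp
  finally show False using n1 by simp
qed

lemma positive_elem_star_mult_add_mult_star:
  assumes C: "fin_dim_subalg C" "c \<in> C" shows "positive_elem (c * st c + st c * c)"
proof -
  define h1 where "h1 = c + st c"
  define h2 where "h2 = sc \<i> (c - st c)"
  have "h1 * h1 + h2 * h2 = 2 *\<^sub>R (c * st c + st c * c)"
    unfolding h1_def h2_def by (simp add: sc_mult_left sc_mult_right sc_sc algebra_simps scaleR_2)
  then have eq: "c * st c + st c * c = (1/2) *\<^sub>R (h1 * h1) + (1/2) *\<^sub>R (h2 * h2)"
    by (simp flip: scaleR_add_right)
  have "h1 \<in> C" "h2 \<in> C" unfolding h1_def h2_def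
    using C by (simp_all add: fin_dim_subalg_add fin_dim_subalg_sc fin_dim_subalg_diff fin_dim_subalg_st)
  moreover have "st h1 = h1" "st h2 = h2" unfolding h1_def h2_def
    by (simp_all add: st_add st_sc st_diff add.commute vs.scale_right_diff_distrib vs.scale_minus_left)
  ultimately show ?thesis unfolding eq
    by (intro positive_elem_add[OF C(1)] positive_elem_scaleR positive_elem_square[OF C(1)]
        fin_dim_subalg_scaleR[OF C(1)] fin_dim_subalg_mult[OF C(1)]) auto
qed

text \<open>The key step of the Kelley-Vaught argument: c* c = -Q with Q a projection forces
  c c* to be minus a projection as well, while c c* + c* c is positive.\<close>

lemma star_mult_eq_neg_projection:
  assumes C: "fin_dim_subalg C" "c \<in> C" and cc: "st c * c = - Q" and cQ: "c * Q = c"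
  shows "Q = 0"
proof -
  define s where "s = - (c * st c)"
  have Qeq: "Q = - (st c * c)" using cc by simp
  have "st s = s" unfolding s_def by (simp add: st_minus st_mult)
  moreover have "s * s = s"
  proof -
    have "s * s = c * (st c * c) * st c" unfolding s_def by (simp add: mult.assoc)
    also have "\<dots> = s" using cc cQ unfolding s_def by simp
    finally show ?thesis .
  qed
  moreover have "positive_elem (- s)"
  proof -
    have "Q \<in> C"
      using Qeq fin_dim_subalg_scaleR[OF C(1) fin_dim_subalg_mult[OF C(1) fin_dim_subalg_st[OF C] C(2)], of "-1"]
      by simp
    moreover have "st Q = Q" using Qeq by (simp add: st_mult st_minus)
    moreover have "Q * Q = Q"
    proof -
      have "Q * Q = - (st c * c * Q)" using cc by simp
      also have "\<dots> = - (st c * (c * Q))" by (simp add: mult.assoc)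
      also have "\<dots> = Q" using cc cQ by simp
      finally show ?thesis .
    qed
    ultimately have "positive_elem ((c * st c + st c * c) + Q)"
      by (intro positive_elem_add[OF C(1)] positive_elem_star_mult_add_mult_star[OF C]
          positive_elem_projection fin_dim_subalg_add[OF C(1)] fin_dim_subalg_mult[OF C(1)]
          fin_dim_subalg_st[OF C] C(2))
    then show ?thesis unfolding s_def using cc by simp
  qed
  ultimately have "s = 0" by (rule projection_eq_0_of_positive_neg)
  then have "st c = 0" unfolding s_def using st_mult_self_eq_0_iff[of "st c"] by simp
  then show "Q = 0" using Qeq by simp
qed


lemma positive_elem_star_mult_fin_dim:
  assumes C: "fin_dim_subalg C" "b \<in> C" shows "positive_elem (st b * b)"
proof -
  define a where "a = st b * b"
  have "a \<in> C" unfolding a_def using C by (simp add: fin_dim_subalg_mult fin_dim_subalg_st)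
  moreover have "st a = a" unfolding a_def by (simp add: st_mult)
  ultimately obtain L P where LP: "spectral_family L P" "a = (\<Sum>l\<in>L. l *\<^sub>R P l)"
    and PC: "\<And>l. l \<in> L \<Longrightarrow> P l \<in> C"
    using spectral_theorem[OF C(1)] C(1) unfolding fin_dim_subalg_def by metis
  have "l \<ge> 0" if l: "l \<in> L" for l
  proof (rule ccontr)
    assume "\<not> l \<ge> 0"
    (* Q is the spectral projection of a for its negative part, on which r is |a|^(-1/2);
       then c = b r satisfies c* c = r a r = -Q. *)
    define Q where "Q = (\<Sum>m\<in>L. (if m < 0 then 1 else 0) *\<^sub>R P m)"
    define r where "r = (\<Sum>m\<in>L. (if m < 0 then 1 / sqrt (- m) else 0) *\<^sub>R P m)"
    have rC: "r \<in> C" unfolding r_def using PC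
      by (intro star_subalg_sum fin_dim_subalg_scaleR[OF C(1)]) (use C(1) in \<open>auto simp: fin_dim_subalg_def\<close>)
    have "st (b * r) * (b * r) = r * a * r"
      unfolding a_def r_def by (simp add: st_mult spectral_sum_sa[OF LP(1)] mult.assoc)
    also have "\<dots> = - Q"
      unfolding LP(2) r_def Q_def spectral_sum_mult[OF LP(1)] sum_negf[symmetric]
      by (intro sum.cong) (auto simp: field_simps real_sqrt_mult[symmetric])
    finally have "st (b * r) * (b * r) = - Q" .
    moreover have "b * r * Q = b * r"
      unfolding r_def Q_def mult.assoc spectral_sum_mult[OF LP(1)]
      by (intro arg_cong[where f = "(*) b"] sum.cong) auto
    ultimately have "Q = 0"
      by (rule star_mult_eq_neg_projection[OF C(1) fin_dim_subalg_mult[OF C rC]])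
    then show False
      using norm_spectral_sum_ge[OF LP(1) l, of "\<lambda>m. if m < 0 then 1 else 0"] \<open>\<not> l \<ge> 0\<close>
      unfolding Q_def by simp
  qed
  then show ?thesis unfolding a_def[symmetric] LP(2) by (rule positive_elem_spectral_sum[OF LP(1)])
qed

lemma bounded_linear_st: "bounded_linear st"
  by (rule bounded_linear_intro[of _ 1]) (simp_all add: st_add st_scaleR)

lemma closed_positive_star_mult: "closed {b. positive_elem (st b * b)}"
proof -
  have "continuous_on UNIV st" by (rule linear_continuous_on[OF bounded_linear_st])
  then have "closed {b. norm (norm (st b * b) *\<^sub>R 1 - st b * b) \<le> norm (st b * b)}"
    by (intro closed_Collect_le continuous_intros)
  then show ?thesis unfolding positive_elem_def by (simp add: st_mult)
qed

lemma positive_elem_normalizer: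
  assumes C: "fin_dim_subalg C" "star_subalg sc st K" "K \<subseteq> C"
    and p: "p \<in> K" "positive_elem p" "p \<noteq> 0"
  obtains u E where "u \<in> K" "st u = u" "u * (p * u) = E" "u * E = u" "st E = E" "E * E = E" "E \<noteq> 0"
proof -
  have "st p = p" using p(2) unfolding positive_elem_def by simp
  then obtain L P where LP: "spectral_family L P" "p = (\<Sum>l\<in>L. l *\<^sub>R P l)"
    and PK: "\<And>l. l \<in> L \<Longrightarrow> P l \<in> K"
    using spectral_theorem[OF C(1)] C p(1) by (metis subsetD)
  obtain lm where lm: "lm \<in> L" "lm \<noteq> 0"
    using p(3) LP(2) by (metis (no_types, lifting) scale_zero_left sum.neutral)
  have "lm \<ge> 0"
    using spectral_nonneg_of_norm_le[OF LP(1) _ lm(1), of "norm p" "\<lambda>l. l"] p(2) LP(2)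
    unfolding positive_elem_def by simp
  with lm have lpos: "lm > 0" by simp
  define E where "E = P lm"
  have E: "st E = E" "E * E = E" "E \<noteq> 0"
    using LP(1) lm(1) unfolding spectral_family_def E_def by auto
  have pE: "p * E = lm *\<^sub>R E"
    unfolding E_def LP(2) by (rule spectral_sum_mult_projection[OF LP(1) lm(1)])
  define u where "u = (1 / sqrt lm) *\<^sub>R E"
  show thesis
  proof (rule that)
    show "u \<in> K"
      using C(2) PK[OF lm(1)] sc_of_real[of "1 / sqrt lm" E] unfolding u_def E_def star_subalg_def by metis
    show "st u = u" unfolding u_def by (simp add: st_scaleR E)
    show "u * (p * u) = E"
      unfolding u_def using lpos by (simp add: pE E(2) real_sqrt_mult[symmetric])
    show "u * E = u" unfolding u_def by (simp add: E(2))
  qed (use E in auto)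
qed


end

section \<open>Quasi-local algebras\<close>

lemma interval_nbhd: assumes "interval I" shows "interval (nbhd T I)"
proof -
  obtain a b where ab: "a \<le> b" "I = {a..b}" using assms unfolding interval_def by blast
  have "nbhd T I = {a - int T..b + int T}"
  proof (intro set_eqI iffI)
    fix k assume "k \<in> {a - int T..b + int T}"
    then have "max a (min b k) \<in> I" "\<bar>k - max a (min b k)\<bar> \<le> int T" using ab by auto
    then show "k \<in> nbhd T I" unfolding nbhd_def by blast
  qed (auto simp: nbhd_def ab)
  then show ?thesis unfolding interval_def using ab by auto
qed

locale quasi_local_alg = cstar sc st
  for sc :: "complex \<Rightarrow> 'a::{real_normed_algebra_1,banach} \<Rightarrow> 'a" and st +
  fixes Aloc :: "int set \<Rightarrow> 'a set"
  assumes quasi_local: "quasi_local sc st Aloc"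
begin

lemma fin_dim_subalg_local: "interval I \<Longrightarrow> fin_dim_subalg (Aloc I)"
  using quasi_local unfolding quasi_local_def fin_dim_subalg_def by simp

lemma local_dense: "closure (\<Union>{Aloc I | I. interval I}) = UNIV"
  using quasi_local unfolding quasi_local_def by (elim conjE)

theorem positive_elem_star_mult: "positive_elem (st b * b)"
proof -
  have "\<Union>{Aloc I | I. interval I} \<subseteq> {b. positive_elem (st b * b)}"
    using positive_elem_star_mult_fin_dim fin_dim_subalg_local by blast
  then have "closure (\<Union>{Aloc I | I. interval I}) \<subseteq> {b. positive_elem (st b * b)}"
    using closed_positive_star_mult by (rule closure_minimal)
  then show ?thesis using local_dense by auto
qed

definition compl_commutant :: "int set \<Rightarrow> 'a set" where
  "compl_commutant I = {x. \<forall>a\<in>Acompl sc st Aloc I. x * a = a * x}"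

lemma star_subalg_Acompl: "star_subalg sc st (Acompl sc st Aloc I)"
  unfolding Acompl_def gen_cstar_def star_subalg_def by blast

lemma star_subalg_compl_commutant: "star_subalg sc st (compl_commutant I)"
  unfolding star_subalg_def
proof (intro conjI ballI allI)
  show "0 \<in> compl_commutant I" "1 \<in> compl_commutant I" unfolding compl_commutant_def by auto
next
  fix a b assume a: "a \<in> compl_commutant I" and b: "b \<in> compl_commutant I"
  then show "a + b \<in> compl_commutant I"
    unfolding compl_commutant_def by (simp add: distrib_left distrib_right)
  have "a * b * y = y * (a * b)" if "y \<in> Acompl sc st Aloc I" for y
  proof -
    have "a * b * y = a * (y * b)" using b that unfolding compl_commutant_def by (simp add: mult.assoc)
    also have "\<dots> = y * (a * b)" using a that unfolding compl_commutant_def by (simp flip: mult.assoc)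
    finally show ?thesis .
  qed
  then show "a * b \<in> compl_commutant I" unfolding compl_commutant_def by blast
next
  fix c a assume "a \<in> compl_commutant I"
  then show "sc c a \<in> compl_commutant I"
    unfolding compl_commutant_def by (simp add: sc_mult_left sc_mult_right)
next
  fix a assume a: "a \<in> compl_commutant I"
  have "st a * y = y * st a" if "y \<in> Acompl sc st Aloc I" for y
  proof -
    have "st y \<in> Acompl sc st Aloc I" using star_subalg_Acompl that unfolding star_subalg_def by blast
    then have "st (a * st y) = st (st y * a)" using a unfolding compl_commutant_def by simp
    then show ?thesis by (simp add: st_mult)
  qed
  then show "st a \<in> compl_commutant I" unfolding compl_commutant_def by blast
qed

end

section \<open>Correspondences and projective bases\<close>

locale cstar_correspondence = cstar sc st
  for sc :: "complex \<Rightarrow> 'a::{real_normed_algebra_1,banach} \<Rightarrow> 'a" and st +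
  fixes scX :: "complex \<Rightarrow> 'x::ab_group_add \<Rightarrow> 'x" and ra :: "'x \<Rightarrow> 'a \<Rightarrow> 'x"
    and la :: "'a \<Rightarrow> 'x \<Rightarrow> 'x" and ip :: "'x \<Rightarrow> 'x \<Rightarrow> 'a"
  assumes correspondence: "correspondence sc st scX ra la ip"
begin

lemma scX_add_left: "scX (c + d) x = scX c x + scX d x"
  and scX_add_right: "scX c (x + y) = scX c x + scX c y"
  and scX_mult: "scX (c * d) x = scX c (scX d x)"
  and scX_one: "scX 1 x = x"
  and ra_add_left: "ra (x + y) a = ra x a + ra y a"
  and ra_add_right: "ra x (a + b) = ra x a + ra x b"
  and ra_mult: "ra x (a * b) = ra (ra x a) b"
  and ra_scX: "ra (scX c x) a = scX c (ra x a)"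
  and ra_sc: "ra x (sc c a) = scX c (ra x a)"
  and la_add_right: "la a (x + y) = la a x + la a y"
  and la_scX: "la a (scX c x) = scX c (la a x)"
  and la_ra: "la a (ra x b) = ra (la a x) b"
  and ip_la: "ip (la a x) y = ip x (la (st a) y)"
  and ip_add_right: "ip x (y + z) = ip x y + ip x z"
  and ip_scX: "ip x (scX c y) = sc c (ip x y)"
  and ip_ra: "ip x (ra y a) = ip x y * a"
  and ip_swap: "ip y x = st (ip x y)"
  and ip_self_eq_star_mult: "\<exists>b. ip x x = st b * b"
  and ip_self_eq_0: "ip x x = 0 \<Longrightarrow> x = 0"
  using correspondence unfolding correspondence_def by metis+

sublocale vsX: vector_space scX
  by unfold_locales (simp_all add: scX_add_left scX_add_right scX_mult scX_one)

lemma ra_0_left [simp]: "ra 0 a = 0"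
  using ra_add_left[of 0 0 a] by simp

lemma ra_0_right [simp]: "ra x 0 = 0"
  using ra_add_right[of x 0 0] by simp

lemma ra_diff_right: "ra x (a - b) = ra x a - ra x b"
  using ra_add_right[of x "a - b" b] by (simp add: eq_diff_eq)

lemma ra_sum_left: "ra (sum f A) a = (\<Sum>i\<in>A. ra (f i) a)"
  by (induction A rule: infinite_finite_induct) (auto simp: ra_add_left)

lemma ra_sum_right: "ra x (sum f A) = (\<Sum>i\<in>A. ra x (f i))"
  by (induction A rule: infinite_finite_induct) (auto simp: ra_add_right)

lemma la_0_right [simp]: "la a 0 = 0"
  using la_add_right[of a 0 0] by simp

lemma ip_0_right [simp]: "ip x 0 = 0"
  using ip_add_right[of x 0 0] by simp

lemma ip_diff_right: "ip x (y - z) = ip x y - ip x z"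
  using ip_add_right[of x "y - z" z] by (simp add: eq_diff_eq)

lemma ip_sum_right: "ip x (sum f A) = (\<Sum>i\<in>A. ip x (f i))"
  by (induction A rule: infinite_finite_induct) (auto simp: ip_add_right)

lemma ip_ra_left: "ip (ra x a) y = st a * ip x y"
  by (simp add: ip_swap[of "ra x a"] ip_ra st_mult ip_swap[of x y])

definition frame_of :: "'x set \<Rightarrow> 'x set \<Rightarrow> bool" where
  "frame_of V F \<longleftrightarrow> finite F \<and> F \<subseteq> V \<and> (\<forall>y\<in>V. y = (\<Sum>f\<in>F. ra f (ip f y)))"


lemma exists_normalized_vector:
  assumes C: "fin_dim_subalg C" "star_subalg sc st K" "K \<subseteq> C"
    and V: "\<And>y a. y \<in> V \<Longrightarrow> a \<in> K \<Longrightarrow> ra y a \<in> V" "\<And>y. y \<in> V \<Longrightarrow> ip y y \<in> K"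
      "\<And>y. y \<in> V \<Longrightarrow> positive_elem (ip y y)"
    and x: "x \<in> V" "x \<noteq> 0"
  obtains e E where "e \<in> V" "ip e e = E" "ra e E = e" "st E = E" "E \<noteq> 0"
proof -
  have "ip x x \<noteq> 0" using ip_self_eq_0 x(2) by blast
  then obtain u E where u: "u \<in> K" "st u = u" "u * (ip x x * u) = E" "u * E = u"
    and E: "st E = E" "E \<noteq> 0"
    using positive_elem_normalizer[OF C V(2,3)[OF x(1)]] by blast
  show thesis
  proof (rule that)
    show "ra x u \<in> V" using V(1) x(1) u(1) .
    show "ip (ra x u) (ra x u) = E" using u(2,3) by (simp add: ip_ra_left ip_ra mult.assoc)
    show "ra (ra x u) E = ra x u" by (simp flip: ra_mult add: u(4))
  qed (use E in auto)
qed

definition orth_compl :: "'x \<Rightarrow> 'x set \<Rightarrow> 'x set" where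
  "orth_compl e V = {y \<in> V. ra e (ip e y) = 0}"

lemma subspace_orth_compl: "vsX.subspace V \<Longrightarrow> vsX.subspace (orth_compl e V)"
  unfolding vsX.subspace_def orth_compl_def by (auto simp: ip_add_right ra_add_right ip_scX ra_sc)

lemma ra_orth_compl:
  "(\<And>y a. y \<in> V \<Longrightarrow> a \<in> K \<Longrightarrow> ra y a \<in> V) \<Longrightarrow> y \<in> orth_compl e V \<Longrightarrow> a \<in> K \<Longrightarrow>
    ra y a \<in> orth_compl e V"
  unfolding orth_compl_def by (simp add: ip_ra ra_mult)

lemma not_in_orth_compl:
  assumes "ip e e = E" "ra e E = e" "E \<noteq> 0" shows "e \<notin> orth_compl e V"
  using assms ip_0_right[of 0] unfolding orth_compl_def by auto

lemma frame_of_insert: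
  assumes e: "ip e e = E" "ra e E = e" "st E = E" "E \<noteq> 0" "e \<in> V"
    and V: "vsX.subspace V" "\<And>y. y \<in> V \<Longrightarrow> ra e (ip e y) \<in> V"
    and F: "frame_of (orth_compl e V) F"
  shows "frame_of V (insert e F)"
proof -
  have finF: "finite F" and FV': "F \<subseteq> orth_compl e V"
    and expand: "\<And>y. y \<in> orth_compl e V \<Longrightarrow> y = (\<Sum>f\<in>F. ra f (ip f y))"
    using F unfolding frame_of_def by blast+
  have ip_e_ra: "ip e (ra e a) = E * a" for a using e(1) by (simp add: ip_ra)
  have ra_e_E: "ra e (E * a) = ra e a" for a using e(2) by (simp add: ra_mult)
  have orth: "ip f e = 0" if "f \<in> orth_compl e V" for f
  proof -
    have "E * ip e f = 0" using that ip_e_ra[of "ip e f"] unfolding orth_compl_def by simp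
    moreover have "ip e f = st E * ip e f" using e(2) ip_ra_left[of e E f] by simp
    ultimately have "ip e f = 0" using e(3) by simp
    then show ?thesis using ip_swap[of f e] by simp
  qed
  have "e \<notin> F" using FV' not_in_orth_compl[OF e(1,2,4)] by blast
  have "y = (\<Sum>f\<in>insert e F. ra f (ip f y))" if y: "y \<in> V" for y
  proof -
    define z where "z = ra e (ip e y)"
    have "y - z \<in> orth_compl e V"
      using vsX.subspace_diff[OF V(1) y V(2)[OF y]] unfolding z_def orth_compl_def
      by (simp add: ip_diff_right ra_diff_right ip_e_ra ra_e_E)
    then have "y - z = (\<Sum>f\<in>F. ra f (ip f (y - z)))" by (rule expand)
    also have "\<dots> = (\<Sum>f\<in>F. ra f (ip f y))"
      using FV' orth unfolding z_def by (intro sum.cong) (auto simp: ip_diff_right ip_ra)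
    finally have "y = z + (\<Sum>f\<in>F. ra f (ip f y))" by (simp add: diff_eq_eq add.commute)
    then show ?thesis using finF \<open>e \<notin> F\<close> unfolding z_def by simp
  qed
  then show ?thesis using finF FV' e(5) unfolding frame_of_def orth_compl_def by blast
qed

text \<open>Gram-Schmidt orthonormalisation, with projections in place of the norms 1 of the
  basis vectors.\<close>

lemma frame_exists:
  assumes C: "fin_dim_subalg C" "star_subalg sc st K" "K \<subseteq> C" and G: "finite G"
  shows "vsX.subspace V \<Longrightarrow> V \<subseteq> vsX.span G \<Longrightarrow> (\<And>y a. y \<in> V \<Longrightarrow> a \<in> K \<Longrightarrow> ra y a \<in> V) \<Longrightarrow>
    (\<And>x y. x \<in> V \<Longrightarrow> y \<in> V \<Longrightarrow> ip x y \<in> K) \<Longrightarrow> (\<And>y. y \<in> V \<Longrightarrow> positive_elem (ip y y)) \<Longrightarrow>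
    \<exists>F. frame_of V F"
proof (induction "vsX.dim V" arbitrary: V rule: less_induct)
  case less
  note V = less.prems
  show ?case
  proof (cases "V \<subseteq> {0}")
    case True
    then show ?thesis unfolding frame_of_def by (intro exI[of _ "{}"]) auto
  next
    case False
    then obtain x where x: "x \<in> V" "x \<noteq> 0" by blast
    have "ip y y \<in> K" if "y \<in> V" for y using V(4)[OF that that] .
    then obtain e E where eE: "e \<in> V" "ip e e = E" "ra e E = e" "st E = E" "E \<noteq> 0"
      using exists_normalized_vector[OF C V(3) _ V(5) x] by blast
    have sub: "orth_compl e V \<subseteq> V" unfolding orth_compl_def by blast
    have "vsX.dim (orth_compl e V) < vsX.dim V"
      using vsX.dim_less_of_not_in_subspace[OF subspace_orth_compl[OF V(1)] sub eE(1)
          not_in_orth_compl[OF eE(2,3,5)] V(1,2) G] .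
    then have "\<exists>F. frame_of (orth_compl e V) F"
    proof (rule less.hyps[OF _ subspace_orth_compl[OF V(1)]])
      show "orth_compl e V \<subseteq> vsX.span G" using sub V(2) by blast
      show "ra y a \<in> orth_compl e V" if "y \<in> orth_compl e V" "a \<in> K" for y a
        using ra_orth_compl[OF V(3) that] .
      show "ip x y \<in> K" if "x \<in> orth_compl e V" "y \<in> orth_compl e V" for x y
        using that sub V(4) by blast
      show "positive_elem (ip y y)" if "y \<in> orth_compl e V" for y
        using that sub V(5) by blast
    qed
    moreover have "ra e (ip e y) \<in> V" if "y \<in> V" for y
      using V(3)[OF eE(1) V(4)[OF eE(1) that]] .
    ultimately show ?thesis using frame_of_insert[OF eE(2-5,1) V(1)] by blast
  qed
qed


lemma frame_of_expand_right_span: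
  assumes "frame_of V F" "x \<in> right_span ra V"
  shows "x = (\<Sum>f\<in>F. ra f (ip f x))"
proof -
  obtain n :: nat and xs ys where x: "x = (\<Sum>i<n. ra (xs i) (ys i))" "\<forall>i<n. xs i \<in> V"
    using assms(2) unfolding right_span_def by blast
  have "(\<Sum>f\<in>F. ra f (ip f x)) = (\<Sum>i<n. \<Sum>f\<in>F. ra (ra f (ip f (xs i))) (ys i))"
    unfolding x(1) by (simp add: ip_sum_right ip_ra ra_sum_right ra_mult sum.swap[of _ F])
  also have "\<dots> = (\<Sum>i<n. ra (xs i) (ys i))"
    using assms(1) x(2) unfolding frame_of_def by (auto simp flip: ra_sum_left intro!: sum.cong)
  finally show ?thesis using x(1) by simp
qed

lemma proj_basis_of_frame_of:
  assumes "frame_of V F" "right_span ra V = UNIV" shows "proj_basis ra ip F"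
  using assms frame_of_expand_right_span unfolding proj_basis_def frame_of_def by blast

lemma right_span_eq_UNIV_of_proj_basis:
  assumes "proj_basis ra ip B" "B \<subseteq> V" shows "right_span ra V = UNIV"
proof -
  have "x \<in> right_span ra V" for x
  proof -
    obtain h where h: "bij_betw h {..<card B} B"
      using assms(1) ex_bij_betw_nat_finite[of B] unfolding proj_basis_def by (auto simp: atLeast0LessThan)
    have "x = (\<Sum>b\<in>B. ra b (ip b x))" using assms(1) unfolding proj_basis_def by blast
    also have "\<dots> = (\<Sum>i<card B. ra (h i) (ip (h i) x))"
      using sum.reindex_bij_betw[OF h, of "\<lambda>b. ra b (ip b x)"] by simp
    finally show ?thesis
      using h assms(2) bij_betwE unfolding right_span_def by fastforce
  qed
  then show ?thesis by blast
qed

lemma fin_dim_of_proj_basis: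
  assumes B: "proj_basis ra ip B" "B \<subseteq> V" and V: "vsX.subspace V"
    and C: "fin_dim_C sc C" "\<And>b x. b \<in> B \<Longrightarrow> x \<in> V \<Longrightarrow> ip b x \<in> C"
  shows "fin_dim_C scX V"
proof -
  obtain E where E: "finite E" "C = vs.span E"
    using C(1) fin_dim_C_iff_span[OF vs.vector_space_axioms] by blast
  define G where "G = (\<lambda>(b, e). ra b e) ` (B \<times> E)"
  have "V \<subseteq> vsX.span G"
  proof
    fix x assume x: "x \<in> V"
    have "ra b (ip b x) \<in> vsX.span G" if b: "b \<in> B" for b
    proof -
      obtain u where u: "ip b x = (\<Sum>e\<in>E. sc (u e) e)"
        using C(2)[OF b x] vs.span_finite[OF E(1)] E(2) by blast
      have "ra b (ip b x) = (\<Sum>e\<in>E. scX (u e) (ra b e))" unfolding u by (simp add: ra_sum_right ra_sc)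
      also have "\<dots> \<in> vsX.span G"
        by (intro vsX.span_sum vsX.span_scale vsX.span_base) (use b in \<open>auto simp: G_def\<close>)
      finally show ?thesis .
    qed
    then have "(\<Sum>b\<in>B. ra b (ip b x)) \<in> vsX.span G" by (intro vsX.span_sum)
    then show "x \<in> vsX.span G" using B(1) unfolding proj_basis_def by metis
  qed
  moreover have "finite G" unfolding G_def using B(1) E(1) unfolding proj_basis_def by simp
  ultimately obtain F where "finite F" "F \<subseteq> V" "vsX.span F = V"
    using vsX.finite_basis_of_subspace[OF V] by metis
  then show ?thesis using fin_dim_C_iff_span[OF vsX.vector_space_axioms] by metis
qed

end

section \<open>DHR bimodules\<close>

locale quasi_local_correspondence =
  quasi_local_alg sc st Aloc + cstar_correspondence sc st scX ra la ip
  for sc :: "complex \<Rightarrow> 'a::{real_normed_algebra_1,banach} \<Rightarrow> 'a" and st Aloc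
    and scX :: "complex \<Rightarrow> 'x::ab_group_add \<Rightarrow> 'x" and ra la ip
begin

abbreviation XI :: "int set \<Rightarrow> 'x set" where
  "XI I \<equiv> Xloc sc st Aloc ra la I"

lemma subspace_XI: "vsX.subspace (XI I)"
  unfolding vsX.subspace_def Xloc_def
  by (auto simp: la_add_right ra_add_left la_scX ra_scX)

lemma ra_XI: assumes "x \<in> XI I" "a \<in> compl_commutant I" shows "ra x a \<in> XI I"
proof -
  have "la c (ra x a) = ra (ra x a) c" if c: "c \<in> Acompl sc st Aloc I" for c
  proof -
    have "la c (ra x a) = ra x (c * a)" using assms(1) c unfolding Xloc_def by (simp add: la_ra ra_mult)
    also have "c * a = a * c" using assms(2) c unfolding compl_commutant_def by simp
    finally show ?thesis by (simp add: ra_mult)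
  qed
  then show ?thesis unfolding Xloc_def by blast
qed

lemma ip_XI: assumes "x \<in> XI I" "y \<in> XI I" shows "ip x y \<in> compl_commutant I"
proof -
  have "ip x y * a = a * ip x y" if a: "a \<in> Acompl sc st Aloc I" for a
  proof -
    have sta: "st a \<in> Acompl sc st Aloc I" using star_subalg_Acompl a unfolding star_subalg_def by blast
    have "ip x y * a = ip x (la a y)" using assms(2) a unfolding Xloc_def by (simp add: ip_ra)
    also have "\<dots> = ip (la (st a) x) y" using ip_la[of "st a" x y] by simp
    also have "\<dots> = a * ip x y" using assms(1) sta unfolding Xloc_def by (simp add: ip_ra_left)
    finally show ?thesis .
  qed
  then show ?thesis unfolding compl_commutant_def by blast
qed

lemma ip_self_positive: "positive_elem (ip x x)"
  using ip_self_eq_star_mult[of x] positive_elem_star_mult by metis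

lemma weak_haag_nbhd:
  assumes "weak_haag sc st Aloc"
  obtains T where "\<And>I. interval I \<Longrightarrow> compl_commutant I \<subseteq> Aloc (nbhd T I)"
  using assms unfolding weak_haag_def compl_commutant_def by blast

lemma proj_basis_in_XI_of_DHR:
  assumes "weak_haag sc st Aloc" "DHR_bimodule sc st Aloc scX ra la"
  shows "\<exists>S::nat. \<forall>I. interval I \<longrightarrow> card I \<ge> S \<longrightarrow> (\<exists>B. B \<subseteq> XI I \<and> proj_basis ra ip B)"
proof -
  obtain T where T: "\<And>I. interval I \<Longrightarrow> compl_commutant I \<subseteq> Aloc (nbhd T I)"
    using weak_haag_nbhd[OF assms(1)] by blast
  obtain R :: nat where R: "\<And>I. interval I \<Longrightarrow> card I \<ge> R \<Longrightarrow>
      fin_dim_C scX (XI I) \<and> right_span ra (XI I) = UNIV"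
    using assms(2) unfolding DHR_bimodule_def by blast
  have "\<exists>B. B \<subseteq> XI I \<and> proj_basis ra ip B" if I: "interval I" "card I \<ge> R" for I
  proof -
    obtain G where G: "finite G" "XI I = vsX.span G"
      using R[OF I] fin_dim_C_iff_span[OF vsX.vector_space_axioms] by blast
    obtain F where "frame_of (XI I) F"
      using frame_exists[OF fin_dim_subalg_local[OF interval_nbhd[OF I(1)]]
          star_subalg_compl_commutant T[OF I(1)] G(1) subspace_XI]
        G(2) ra_XI ip_XI ip_self_positive by blast
    then show ?thesis
      using proj_basis_of_frame_of R[OF I] unfolding frame_of_def by blast
  qed
  then show ?thesis by blast
qed

lemma DHR_of_proj_basis_in_XI:
  assumes "weak_haag sc st Aloc"
    and "\<exists>S::nat. \<forall>I. interval I \<longrightarrow> card I \<ge> S \<longrightarrow> (\<exists>B. B \<subseteq> XI I \<and> proj_basis ra ip B)"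
  shows "DHR_bimodule sc st Aloc scX ra la"
proof -
  obtain T where T: "\<And>I. interval I \<Longrightarrow> compl_commutant I \<subseteq> Aloc (nbhd T I)"
    using weak_haag_nbhd[OF assms(1)] by blast
  obtain S :: nat where S: "\<And>I. interval I \<Longrightarrow> card I \<ge> S \<Longrightarrow> \<exists>B. B \<subseteq> XI I \<and> proj_basis ra ip B"
    using assms(2) by blast
  have "fin_dim_C scX (XI I) \<and> right_span ra (XI I) = UNIV" if I: "interval I" "card I \<ge> S" for I
  proof -
    obtain B where B: "B \<subseteq> XI I" "proj_basis ra ip B" using S[OF I] by blast
    have "fin_dim_C sc (Aloc (nbhd T I))"
      using fin_dim_subalg_local[OF interval_nbhd[OF I(1)]] unfolding fin_dim_subalg_def by blast
    then have "fin_dim_C scX (XI I)"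
      using fin_dim_of_proj_basis[OF B(2,1) subspace_XI] ip_XI B(1) T[OF I(1)] by blast
    then show ?thesis using right_span_eq_UNIV_of_proj_basis[OF B(2,1)] by blast
  qed
  then show ?thesis unfolding DHR_bimodule_def by blast
qed

end

theorem mainTheorem2:
  fixes sc :: "complex \<Rightarrow> 'a::{real_normed_algebra_1,banach} \<Rightarrow> 'a"
    and st :: "'a \<Rightarrow> 'a"
    and Aloc :: "int set \<Rightarrow> 'a set"
    and scX :: "complex \<Rightarrow> 'x::ab_group_add \<Rightarrow> 'x"
    and ra :: "'x \<Rightarrow> 'a \<Rightarrow> 'x"
    and la :: "'a \<Rightarrow> 'x \<Rightarrow> 'x"
    and ip :: "'x \<Rightarrow> 'x \<Rightarrow> 'a"
  assumes "quasi_local sc st Aloc"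
    and "weak_haag sc st Aloc"
    and "correspondence sc st scX ra la ip"
  shows "DHR_bimodule sc st Aloc scX ra la \<longleftrightarrow>
    (\<exists>S::nat. \<forall>I. interval I \<longrightarrow> card I \<ge> S \<longrightarrow>
       (\<exists>B. B \<subseteq> Xloc sc st Aloc ra la I \<and> proj_basis ra ip B))"
proof -
  have "cstar_algebra sc st" using assms(1) unfolding quasi_local_def by blast
  then interpret quasi_local_correspondence sc st Aloc scX ra la ip
    using assms(1,3) by unfold_locales
  show ?thesis
    using proj_basis_in_XI_of_DHR[OF assms(2)] DHR_of_proj_basis_in_XI[OF assms(2)] by blast
qed

end
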